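(* Let $F\colon[0,+\infty)\to[0,+\infty)$ be a continuous metric preserving function, let $X$ be an mm-space and $X^F:=(X,F\circ d_X,m_X)$. Then (1) $\sup_{\varepsilon>0}\alpha_{X^F}(2F(s)+\varepsilon)\le\alpha_X(s)$ for every $s>0$; (2) $\mathrm{OD}(X^F;-2\kappa)\le 4F(\mathrm{OD}(X;-\kappa))$ for every $\kappa>0$.
   Context: An mm-space is a triple $(X,d_X,m_X)$ with $(X,d_X)$ complete separable metric space and $m_X$ a Borel probability measure. $F\colon[0,+\infty)\to[0,+\infty)$ is metric preserving if $F\circ d$ is a metric for every metric $d$. For $A\subset X$, $r>0$: $U_r(A)=\{x: d_X(x,A)<r\}$. Concentration function: $\alpha_X(r):=\sup\{1-m_X(U_r(A)) : A\subset X \text{ Borel}, m_X(A)\ge 1/2\}$ (for $X^F$ neighborhoods are taken w.r.t. $F\circ d_X$). Partial diameter: for $\alpha\le 1$, $\mathrm{PD}(X;\alpha)$ is the infimum of $\operatorname{diam}A$ over Borel $A\subset X$ with $m_X(A)\ge\alpha$. Observable diameter: $\mathrm{OD}(X;-\kappa):=\sup_{f}\mathrm{PD}((\mathbb R,|\cdot|,f_*m_X);1-\kappa)$, the sup over all 1-Lipschitz $f\colon X\to\mathbb R$. *)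

theory Defs
  imports "HOL-Probability.Probability"
begin

definition metric_preserving :: "(real \<Rightarrow> real) \<Rightarrow> bool" where
  "metric_preserving F \<longleftrightarrow> (\<forall>t\<ge>0. F t \<ge> 0) \<and>
     (\<forall>(M::real set) d. Metric_space M d \<longrightarrow> Metric_space M (\<lambda>x y. F (d x y)))"

definition mm_space :: "'a set \<Rightarrow> ('a \<Rightarrow> 'a \<Rightarrow> real) \<Rightarrow> 'a measure \<Rightarrow> bool" where
  "mm_space M d m \<longleftrightarrow> Metric_space M d \<and> Metric_space.mcomplete M d \<and>
     separable_space (Metric_space.mtopology M d) \<and>
     prob_space m \<and> space m = M \<and>
     sets m = sigma_sets M {U. openin (Metric_space.mtopology M d) U}"

definition nbhd :: "'a set \<Rightarrow> ('a \<Rightarrow> 'a \<Rightarrow> real) \<Rightarrow> real \<Rightarrow> 'a set \<Rightarrow> 'a set" where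
  "nbhd M d r A = {x \<in> M. \<exists>a\<in>A. d x a < r}"

definition concentration :: "'a set \<Rightarrow> ('a \<Rightarrow> 'a \<Rightarrow> real) \<Rightarrow> 'a measure \<Rightarrow> real \<Rightarrow> real" where
  "concentration M d m r =
     Sup {1 - measure m (nbhd M d r A) | A. A \<in> sets m \<and> measure m A \<ge> 1/2}"

definition ediam :: "('a \<Rightarrow> 'a \<Rightarrow> real) \<Rightarrow> 'a set \<Rightarrow> ereal" where
  "ediam d A = (if A = {} then 0 else Sup {ereal (d x y) | x y. x \<in> A \<and> y \<in> A})"

definition partial_diameter :: "('a \<Rightarrow> 'a \<Rightarrow> real) \<Rightarrow> 'a measure \<Rightarrow> real \<Rightarrow> ereal" where
  "partial_diameter d m \<alpha> = Inf {ediam d A | A. A \<in> sets m \<and> measure m A \<ge> \<alpha>}"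

definition observable_diameter :: "'a set \<Rightarrow> ('a \<Rightarrow> 'a \<Rightarrow> real) \<Rightarrow> 'a measure \<Rightarrow> real \<Rightarrow> ereal" where
  "observable_diameter M d m \<kappa> =
     Sup {partial_diameter (\<lambda>s t. \<bar>s - t\<bar>) (distr m borel f) (1 - \<kappa>) | f.
            \<forall>x\<in>M. \<forall>y\<in>M. \<bar>f x - f y\<bar> \<le> d x y}"

end

theory Submission
  imports Defs
begin

(* A metric preserving F satisfies F t \<le> 2 F u for 0 \<le> t \<le> u, because F must turn the
   triangle with sides t, u, u into a metric triangle. Hence the d-neighbourhood of radius s
   lies inside the (F \<circ> d)-neighbourhood of radius 2 F(s) + \<epsilon>, which gives (1).
   For (2), let OD(X;-\<kappa>) < r. Applied to the 1-Lipschitz function d(\<cdot>,A), the definition of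
   OD shows that every set A of measure > \<kappa> has an r-neighbourhood of measure \<ge> 1 - \<kappa>.
   If g is 1-Lipschitz for F \<circ> d, this neighbourhood moves g by at most 2 F(r), so every
   half-line of g_* m-measure > \<kappa> becomes a half-line of measure \<ge> 1 - \<kappa> after widening by
   2 F(r). Cutting at the \<kappa>-quantile of g_* m, a left and a right half-line then meet in an
   interval of measure \<ge> 1 - 2\<kappa> and length about 4 F(r). Finally let r decrease to
   OD(X;-\<kappa>), using the continuity of F. *)

section \<open>Metric preserving functions\<close>

lemma metric_preserving_nonneg: "metric_preserving F \<Longrightarrow> 0 \<le> t \<Longrightarrow> 0 \<le> F t"
  unfolding metric_preserving_def by blast

lemma metric_preserving_zero:
  assumes "metric_preserving F"
  shows "F 0 = 0"
proof -
  have "Metric_space {0::real} (\<lambda>x y. 0)"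
    by unfold_locales auto
  then have "Metric_space {0::real} (\<lambda>x y. F 0)"
    using assms unfolding metric_preserving_def by blast
  then show ?thesis
    using Metric_space.zero by fastforce
qed

lemma metric_preserving_le_twice:
  assumes mp: "metric_preserving F" and "0 \<le> t" "t \<le> u"
  shows "F t \<le> 2 * F u"
proof (cases "t = 0")
  case True
  then show ?thesis
    using metric_preserving_zero[OF mp] metric_preserving_nonneg[OF mp, of u] assms by simp
next
  case False
  define e where "e = (\<lambda>x y::real. if x = y then 0
                          else if {x, y} = {0, 1} then t else u)"
  have "Metric_space {0::real, 1, 2} e"
    by unfold_locales (use False assms in \<open>auto simp: e_def doubleton_eq_iff\<close>)
  then have "Metric_space {0::real, 1, 2} (\<lambda>x y. F (e x y))"
    using mp unfolding metric_preserving_def by blast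
  then have "F (e 0 1) \<le> F (e 0 2) + F (e 2 1)"
    by (rule Metric_space.triangle) auto
  then show ?thesis
    by (simp add: e_def doubleton_eq_iff)
qed

lemma mm_space_Metric_space: "mm_space M d m \<Longrightarrow> Metric_space M d"
  and mm_space_prob_space: "mm_space M d m \<Longrightarrow> prob_space m"
  and mm_space_space: "mm_space M d m \<Longrightarrow> space m = M"
  by (simp_all add: mm_space_def)

lemma mm_space_openin_sets:
  "mm_space M d m \<Longrightarrow> openin (Metric_space.mtopology M d) U \<Longrightarrow> U \<in> sets m"
  unfolding mm_space_def by auto

lemma mm_space_borel_measurable:
  fixes h :: "'a \<Rightarrow> real"
  assumes mm: "mm_space M d m"
    and h: "continuous_map (Metric_space.mtopology M d) euclidean h"
  shows "h \<in> borel_measurable m"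
proof (rule borel_measurableI)
  fix S :: "real set"
  assume "open S"
  then have "openin (Metric_space.mtopology M d) {x \<in> M. h x \<in> S}"
    using openin_continuous_map_preimage[OF h]
    by (simp add: Metric_space.topspace_mtopology[OF mm_space_Metric_space[OF mm]])
  moreover have "h -` S \<inter> space m = {x \<in> M. h x \<in> S}"
    using mm_space_space[OF mm] by auto
  ultimately show "h -` S \<inter> space m \<in> sets m"
    using mm_space_openin_sets[OF mm] by simp
qed

context Metric_space
begin

lemma continuous_map_of_modulus:
  fixes g :: "'a \<Rightarrow> real"
  assumes cont: "continuous_on {0..} F" and F0: "F 0 = 0"
    and g: "\<And>x y. x \<in> M \<Longrightarrow> y \<in> M \<Longrightarrow> \<bar>g x - g y\<bar> \<le> F (d x y)"
  shows "continuous_map mtopology euclidean g"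
proof -
  have "\<exists>\<delta>>0. \<forall>x. x \<in> M \<and> d a x < \<delta> \<longrightarrow> dist (g a) (g x) < \<epsilon>"
    if "a \<in> M" "\<epsilon> > 0" for a \<epsilon>
  proof -
    obtain \<delta> where "\<delta> > 0" and \<delta>: "\<And>t. t \<in> {0..} \<Longrightarrow> dist t 0 < \<delta> \<Longrightarrow> dist (F t) (F 0) < \<epsilon>"
      using cont[unfolded continuous_on_iff, rule_format, of 0 \<epsilon>] \<open>\<epsilon> > 0\<close> by auto
    have "dist (g a) (g x) < \<epsilon>" if "x \<in> M" "d a x < \<delta>" for x
      using g[of a x] \<delta>[of "d a x"] that \<open>a \<in> M\<close> F0 by (simp add: dist_real_def)
    then show ?thesis
      using \<open>\<delta> > 0\<close> by blast
  qed
  then have "continuous_map mtopology Met_TC.mtopology g"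
    unfolding metric_continuous_map[OF Met_TC.Metric_space_axioms] by simp
  then show ?thesis
    by simp
qed

lemma mdist_Lipschitz: "a \<in> M \<Longrightarrow> x \<in> M \<Longrightarrow> y \<in> M \<Longrightarrow> \<bar>d x a - d y a\<bar> \<le> d x y"
  using triangle[of x y a] triangle[of y x a] commute[of x y] by linarith

lemma continuous_map_of_Lipschitz:
  fixes g :: "'a \<Rightarrow> real"
  shows "(\<And>x y. x \<in> M \<Longrightarrow> y \<in> M \<Longrightarrow> \<bar>g x - g y\<bar> \<le> d x y) \<Longrightarrow> continuous_map mtopology euclidean g"
  by (rule continuous_map_of_modulus[where F = "\<lambda>t. t"]) auto

lemma openin_nbhd_comp:
  assumes cont: "continuous_on {0..} F" and "A \<subseteq> M"
  shows "openin mtopology (nbhd M (\<lambda>x y. F (d x y)) r A)"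
proof -
  have "openin mtopology {x \<in> M. F (d x a) < r}" if "a \<in> M" for a
  proof -
    have "continuous_map mtopology (top_of_set {0..}) (\<lambda>x. d x a)"
      using mdist_Lipschitz[OF \<open>a \<in> M\<close>]
      by (intro continuous_map_into_subtopology continuous_map_of_Lipschitz) auto
    moreover have "continuous_map (top_of_set {0..}) euclidean F"
      using cont by simp
    ultimately have "continuous_map mtopology euclidean (F \<circ> (\<lambda>x. d x a))"
      by (rule continuous_map_compose)
    then have "openin mtopology {x \<in> topspace mtopology. (F \<circ> (\<lambda>x. d x a)) x \<in> {..<r}}"
      by (rule openin_continuous_map_preimage) simp
    then show ?thesis
      by simp
  qed
  moreover have "nbhd M (\<lambda>x y. F (d x y)) r A = (\<Union>a\<in>A. {x \<in> M. F (d x a) < r})"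
    by (auto simp: nbhd_def)
  ultimately show ?thesis
    using \<open>A \<subseteq> M\<close> by (force intro: openin_Union)
qed

lemma openin_nbhd: "A \<subseteq> M \<Longrightarrow> openin mtopology (nbhd M d r A)"
  using openin_nbhd_comp[of "\<lambda>t. t"] by simp

definition minfdist :: "'a \<Rightarrow> 'a set \<Rightarrow> real" where
  "minfdist x A = (INF a\<in>A. d x a)"

lemma minfdist_le: "a \<in> A \<Longrightarrow> minfdist x A \<le> d x a"
  unfolding minfdist_def by (rule cINF_lower) (auto intro: bdd_belowI[of _ 0])

lemma minfdist_nonneg: "A \<noteq> {} \<Longrightarrow> 0 \<le> minfdist x A"
  unfolding minfdist_def by (rule cINF_greatest) auto

lemma minfdist_zero: "a \<in> A \<Longrightarrow> a \<in> M \<Longrightarrow> minfdist a A = 0"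
  using minfdist_le[of a A a] minfdist_nonneg[of A a] by fastforce

lemma minfdist_less_iff: "A \<noteq> {} \<Longrightarrow> minfdist x A < r \<longleftrightarrow> (\<exists>a\<in>A. d x a < r)"
  unfolding minfdist_def by (rule cINF_less_iff) (auto intro: bdd_belowI[of _ 0])

lemma minfdist_Lipschitz:
  assumes "A \<noteq> {}" "A \<subseteq> M" "x \<in> M" "y \<in> M"
  shows "\<bar>minfdist x A - minfdist y A\<bar> \<le> d x y"
proof -
  have half: "minfdist x A \<le> minfdist y A + d x y" if "x \<in> M" "y \<in> M" for x y
  proof -
    have "minfdist x A - d x y \<le> d y a" if "a \<in> A" for a
      using minfdist_le[OF that, of x] triangle[of x y a] \<open>x \<in> M\<close> \<open>y \<in> M\<close> that \<open>A \<subseteq> M\<close>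
      by force
    then have "minfdist x A - d x y \<le> minfdist y A"
      unfolding minfdist_def[of y] by (intro cINF_greatest \<open>A \<noteq> {}\<close>)
    then show ?thesis
      by simp
  qed
  then show ?thesis
    using half[OF \<open>x \<in> M\<close> \<open>y \<in> M\<close>] half[OF \<open>y \<in> M\<close> \<open>x \<in> M\<close>] commute[of x y]
    by (simp add: abs_le_iff)
qed

end

lemma mm_space_measurable_of_modulus:
  fixes g :: "'a \<Rightarrow> real"
  assumes mm: "mm_space M d m" and "continuous_on {0..} F" "F 0 = 0"
    and "\<And>x y. x \<in> M \<Longrightarrow> y \<in> M \<Longrightarrow> \<bar>g x - g y\<bar> \<le> F (d x y)"
  shows "g \<in> borel_measurable m"
  using assms(2-) by (intro mm_space_borel_measurable[OF mm]
      Metric_space.continuous_map_of_modulus[OF mm_space_Metric_space[OF mm]])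

lemma mm_space_measurable_of_Lipschitz:
  fixes f :: "'a \<Rightarrow> real"
  assumes "mm_space M d m" "\<And>x y. x \<in> M \<Longrightarrow> y \<in> M \<Longrightarrow> \<bar>f x - f y\<bar> \<le> d x y"
  shows "f \<in> borel_measurable m"
  by (rule mm_space_measurable_of_modulus[where F = "\<lambda>t. t"]) (use assms in auto)

section \<open>Partial diameters of real distributions\<close>

lemma ediam_abs_leI:
  assumes "0 \<le> c" "\<And>x y. x \<in> A \<Longrightarrow> y \<in> A \<Longrightarrow> \<bar>x - y\<bar> \<le> c"
  shows "ediam (\<lambda>s t. \<bar>s - t\<bar>) A \<le> ereal c"
  unfolding ediam_def using assms by (auto intro!: Sup_least)

lemma abs_diff_le_ediam: "x \<in> A \<Longrightarrow> y \<in> A \<Longrightarrow> ereal \<bar>x - y\<bar> \<le> ediam (\<lambda>s t. \<bar>s - t\<bar>) A"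
  unfolding ediam_def by (auto intro!: Sup_upper)

lemma partial_diameter_le_ediam:
  "A \<in> sets \<mu> \<Longrightarrow> \<alpha> \<le> measure \<mu> A \<Longrightarrow> partial_diameter d \<mu> \<alpha> \<le> ediam d A"
  unfolding partial_diameter_def by (rule Inf_lower) blast

lemma partial_diameter_abs_nonneg: "0 \<le> partial_diameter (\<lambda>s t. \<bar>s - t\<bar>) \<mu> \<alpha>"
proof -
  have "0 \<le> ediam (\<lambda>s t. \<bar>s - t\<bar>) A" for A :: "real set"
  proof (cases "A = {}")
    case False
    then obtain x where "x \<in> A"
      by blast
    then show ?thesis
      using abs_diff_le_ediam[of x A x] by (simp add: zero_ereal_def)
  qed (simp add: ediam_def)
  then show ?thesis
    unfolding partial_diameter_def by (auto intro: Inf_greatest)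
qed

lemma (in prob_space) measure_Int_ge:
  assumes "A \<in> events" "B \<in> events"
  shows "prob A + prob B - 1 \<le> prob (A \<inter> B)"
  using measure_Un3[of A M B] assms prob_le_1[of "A \<union> B"] fmeasurable_eq_sets by simp

text \<open>Cut at the \<open>\<kappa>\<close>-quantile \<open>Inf T\<close>: the left half-line ending just above it and the
  right half-line starting just below it both have mass \<open>> \<kappa>\<close>.\<close>

lemma (in real_distribution) partial_diameter_le_of_spread:
  assumes "0 < \<kappa>" "0 \<le> c"
    and left: "\<And>t. \<kappa> < measure M {..t} \<Longrightarrow> 1 - \<kappa> \<le> measure M {..t + c}"
    and right: "\<And>t. \<kappa> < measure M {t..} \<Longrightarrow> 1 - \<kappa> \<le> measure M {t - c..}"
  shows "partial_diameter (\<lambda>s t. \<bar>s - t\<bar>) M (1 - 2 * \<kappa>) \<le> ereal (2 * c)"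
proof (cases "1/2 \<le> \<kappa>")
  case True
  then have "partial_diameter (\<lambda>s t. \<bar>s - t\<bar>) M (1 - 2 * \<kappa>) \<le> ediam (\<lambda>s t. \<bar>s - t\<bar>) {}"
    by (intro partial_diameter_le_ediam) auto
  also have "\<dots> \<le> ereal (2 * c)"
    using \<open>0 \<le> c\<close> by (simp add: ediam_def)
  finally show ?thesis .
next
  case False
  define T where "T = {t. \<kappa> < measure M {..t}}"
  have "\<forall>\<^sub>F t in at_top. \<kappa> < cdf M t"
    using False by (intro order_tendstoD(1)[OF cdf_lim_at_top_prob]) simp
  then obtain t where "t \<in> T"
    unfolding T_def cdf_def eventually_at_top_linorder by blast
  have "\<forall>\<^sub>F t in at_bot. cdf M t < \<kappa>"
    by (rule order_tendstoD(2)[OF cdf_lim_at_bot \<open>0 < \<kappa>\<close>])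
  then obtain t0 where t0: "\<And>t. t \<le> t0 \<Longrightarrow> measure M {..t} < \<kappa>"
    unfolding cdf_def eventually_at_bot_linorder by blast
  have "t0 \<le> t" if "t \<in> T" for t
    using t0[of t] that unfolding T_def by (cases "t \<le> t0") auto
  then have "bdd_below T"
    by (rule bdd_belowI)
  define a where "a = Inf T"
  show ?thesis
  proof (rule ereal_le_epsilon2)
    fix \<eta> :: real
    assume "0 < \<eta>"
    obtain a' where "a' \<in> T" "a' < a + \<eta>/2"
      using cInf_lessD[of T "a + \<eta>/2"] \<open>t \<in> T\<close> \<open>0 < \<eta>\<close> unfolding a_def by auto
    have "a \<le> a'"
      unfolding a_def using \<open>a' \<in> T\<close> \<open>bdd_below T\<close> by (rule cInf_lower)
    define b where "b = a - \<eta>/2"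
    have "b \<notin> T"
      using cInf_lower[of b T] \<open>bdd_below T\<close> \<open>0 < \<eta>\<close> unfolding a_def b_def by force
    then have "1 - \<kappa> \<le> measure M {b<..}"
      using prob_compl[of "{..b}"] unfolding T_def by (simp add: Compl_eq_Diff_UNIV[symmetric])
    also have "\<dots> \<le> measure M {b..}"
      by (intro finite_measure_mono) auto
    finally have "1 - \<kappa> \<le> measure M {b - c..}"
      using right[of b] False by simp
    moreover have "1 - \<kappa> \<le> measure M {..a' + c}"
      using left \<open>a' \<in> T\<close> unfolding T_def by blast
    ultimately have "1 - 2 * \<kappa> \<le> measure M {b - c..a' + c}"
      using measure_Int_ge[of "{b - c..}" "{..a' + c}"] by (simp add: atLeastAtMost_def)
    then have "partial_diameter (\<lambda>s t. \<bar>s - t\<bar>) M (1 - 2 * \<kappa>)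
        \<le> ediam (\<lambda>s t. \<bar>s - t\<bar>) {b - c..a' + c}"
      by (intro partial_diameter_le_ediam) auto
    also have "\<dots> \<le> ereal (2 * c + \<eta>)"
      using \<open>a' < a + \<eta>/2\<close> \<open>0 < \<eta>\<close> \<open>0 \<le> c\<close> unfolding b_def by (intro ediam_abs_leI) auto
    finally show "partial_diameter (\<lambda>s t. \<bar>s - t\<bar>) M (1 - 2 * \<kappa>) \<le> ereal (2 * c) + ereal \<eta>"
      by simp
  qed
qed

section \<open>Observable diameter\<close>

lemma observable_diameter_nonneg:
  assumes "mm_space M d m"
  shows "0 \<le> observable_diameter M d m \<kappa>"
proof -
  have "0 \<le> partial_diameter (\<lambda>s t. \<bar>s - t\<bar>) (distr m borel (\<lambda>x. 0::real)) (1 - \<kappa>)"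
    by (rule partial_diameter_abs_nonneg)
  also have "\<dots> \<le> observable_diameter M d m \<kappa>"
    unfolding observable_diameter_def
    by (intro Sup_upper CollectI exI[of _ "\<lambda>x. 0::real"])
      (simp add: Metric_space.nonneg[OF mm_space_Metric_space[OF assms]])
  finally show ?thesis .
qed

lemma observable_diameter_le_of_mcball:
  assumes mm: "mm_space M d m" and "0 \<le> R"
    and ball: "1 - \<kappa> \<le> measure m (Metric_space.mcball M d x0 R)"
  shows "observable_diameter M d m \<kappa> \<le> ereal (2 * R)"
  unfolding observable_diameter_def
proof (rule Sup_least, safe)
  interpret Metric_space M d
    using mm_space_Metric_space[OF mm] .
  interpret prob_space m
    using mm_space_prob_space[OF mm] .
  fix f :: "'a \<Rightarrow> real"
  assume f: "\<forall>x\<in>M. \<forall>y\<in>M. \<bar>f x - f y\<bar> \<le> d x y"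
  then have fm: "f \<in> borel_measurable m"
    by (intro mm_space_measurable_of_Lipschitz[OF mm]) blast
  define I where "I = {f x0 - R .. f x0 + R}"
  have "I \<in> sets borel"
    by (simp add: I_def)
  have "mcball x0 R \<subseteq> f -` I \<inter> space m"
  proof
    fix x
    assume "x \<in> mcball x0 R"
    then have "x \<in> M" "x0 \<in> M" "d x0 x \<le> R"
      by auto
    then have "\<bar>f x0 - f x\<bar> \<le> R"
      using f by fastforce
    then show "x \<in> f -` I \<inter> space m"
      using \<open>x \<in> M\<close> unfolding I_def mm_space_space[OF mm] by (auto simp: abs_le_iff)
  qed
  then have "measure m (mcball x0 R) \<le> measure m (f -` I \<inter> space m)"
    by (rule finite_measure_mono[OF _ measurable_sets[OF fm \<open>I \<in> sets borel\<close>]])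
  then have "1 - \<kappa> \<le> measure (distr m borel f) I"
    using ball measure_distr[OF fm \<open>I \<in> sets borel\<close>] by simp
  then have "partial_diameter (\<lambda>s t. \<bar>s - t\<bar>) (distr m borel f) (1 - \<kappa>)
      \<le> ediam (\<lambda>s t. \<bar>s - t\<bar>) I"
    using \<open>I \<in> sets borel\<close> by (intro partial_diameter_le_ediam) simp_all
  also have "\<dots> \<le> ereal (2 * R)"
    unfolding I_def using \<open>0 \<le> R\<close> by (intro ediam_abs_leI) auto
  finally show "partial_diameter (\<lambda>s t. \<bar>s - t\<bar>) (distr m borel f) (1 - \<kappa>) \<le> ereal (2 * R)" .
qed

lemma observable_diameter_finite:
  assumes mm: "mm_space M d m" and "0 < \<kappa>"
  obtains D where "0 \<le> D" "observable_diameter M d m \<kappa> = ereal D"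
proof -
  interpret Metric_space M d
    using mm_space_Metric_space[OF mm] .
  interpret prob_space m
    using mm_space_prob_space[OF mm] .
  obtain x0 where "x0 \<in> M"
    using not_empty mm_space_space[OF mm] by blast
  have dm: "(\<lambda>x. d x x0) \<in> borel_measurable m"
    by (rule mm_space_measurable_of_Lipschitz[OF mm mdist_Lipschitz[OF \<open>x0 \<in> M\<close>]])
  then have "real_distribution (distr m borel (\<lambda>x. d x x0))"
    by simp
  then have "\<forall>\<^sub>F R in at_top. 1 - \<kappa> < cdf (distr m borel (\<lambda>x. d x x0)) R"
    by (rule order_tendstoD(1)[OF real_distribution.cdf_lim_at_top_prob]) (use \<open>0 < \<kappa>\<close> in simp)
  then obtain N where N: "\<And>R. N \<le> R \<Longrightarrow> 1 - \<kappa> < cdf (distr m borel (\<lambda>x. d x x0)) R"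
    unfolding eventually_at_top_linorder by blast
  define R where "R = max N 0"
  have "(\<lambda>x. d x x0) -` {..R} \<inter> space m = mcball x0 R"
    using \<open>x0 \<in> M\<close> commute by (auto simp: mm_space_space[OF mm])
  then have "1 - \<kappa> \<le> measure m (mcball x0 R)"
    using N[of R] measure_distr[OF dm] unfolding R_def cdf_def by simp
  then have "observable_diameter M d m \<kappa> \<le> ereal (2 * R)"
    unfolding R_def by (intro observable_diameter_le_of_mcball[OF mm]) simp_all
  then show ?thesis
    using observable_diameter_nonneg[OF mm, of \<kappa>] that by (cases "observable_diameter M d m \<kappa>") auto
qed

text \<open>The test function is \<open>d(\<cdot>,A)\<close>: a set of mass \<open>\<ge> 1 - \<kappa>\<close> on which it varies by less than
  \<open>r\<close> must meet \<open>A\<close>, where it vanishes, so it lies in the \<open>r\<close>-neighbourhood of \<open>A\<close>.\<close>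

lemma measure_nbhd_ge_of_observable_diameter_less:
  assumes mm: "mm_space M d m" and "0 \<le> \<kappa>"
    and OD: "observable_diameter M d m \<kappa> < ereal r"
    and A: "A \<in> sets m" "\<kappa> < measure m A"
  shows "1 - \<kappa> \<le> measure m (nbhd M d r A)"
proof -
  interpret Metric_space M d
    using mm_space_Metric_space[OF mm] .
  interpret prob_space m
    using mm_space_prob_space[OF mm] .
  have sp: "space m = M"
    using mm_space_space[OF mm] .
  have "A \<subseteq> M"
    using sets.sets_into_space[OF A(1)] sp by simp
  have "A \<noteq> {}"
    using A(2) \<open>0 \<le> \<kappa>\<close> by auto
  define f where "f x = minfdist x A" for x
  have f_Lip: "\<forall>x\<in>M. \<forall>y\<in>M. \<bar>f x - f y\<bar> \<le> d x y"
    unfolding f_def using minfdist_Lipschitz \<open>A \<noteq> {}\<close> \<open>A \<subseteq> M\<close> by blast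
  then have fm: "f \<in> borel_measurable m"
    by (intro mm_space_measurable_of_Lipschitz[OF mm]) blast
  have "partial_diameter (\<lambda>s t. \<bar>s - t\<bar>) (distr m borel f) (1 - \<kappa>)
      \<le> observable_diameter M d m \<kappa>"
    unfolding observable_diameter_def using f_Lip by (intro Sup_upper) blast
  then have "partial_diameter (\<lambda>s t. \<bar>s - t\<bar>) (distr m borel f) (1 - \<kappa>) < ereal r"
    using OD by (rule le_less_trans)
  then obtain J where "J \<in> sets borel" and J: "1 - \<kappa> \<le> measure (distr m borel f) J"
    and "ediam (\<lambda>s t. \<bar>s - t\<bar>) J < ereal r"
    unfolding partial_diameter_def Inf_less_iff by auto
  define J' where "J' = f -` J \<inter> space m"
  have "J' \<in> sets m" and J': "1 - \<kappa> \<le> measure m J'"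
    using J measurable_sets[OF fm \<open>J \<in> sets borel\<close>] measure_distr[OF fm \<open>J \<in> sets borel\<close>]
    unfolding J'_def by auto
  then have "0 < measure m (A \<inter> J')"
    using measure_Int_ge[OF A(1) \<open>J' \<in> sets m\<close>] A(2) by linarith
  then obtain a where "a \<in> A" "a \<in> J'"
    by (cases "A \<inter> J' = {}") auto
  then have "f a = 0" "f a \<in> J"
    using minfdist_zero \<open>A \<subseteq> M\<close> unfolding J'_def f_def by auto
  then have "0 \<in> J"
    by simp
  have "J' \<subseteq> nbhd M d r A"
  proof
    fix x
    assume "x \<in> J'"
    then have "f x \<in> J"
      unfolding J'_def by blast
    then have "ereal \<bar>f x - 0\<bar> \<le> ediam (\<lambda>s t. \<bar>s - t\<bar>) J"
      using \<open>0 \<in> J\<close> by (rule abs_diff_le_ediam)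
    then have "ereal \<bar>f x - 0\<bar> < ereal r"
      using \<open>ediam _ J < ereal r\<close> by (rule le_less_trans)
    then have "minfdist x A < r"
      unfolding f_def by simp
    then show "x \<in> nbhd M d r A"
      using \<open>x \<in> J'\<close> minfdist_less_iff[OF \<open>A \<noteq> {}\<close>] sp unfolding J'_def nbhd_def by auto
  qed
  moreover have "nbhd M d r A \<in> sets m"
    using mm_space_openin_sets[OF mm openin_nbhd[OF \<open>A \<subseteq> M\<close>]] .
  ultimately show ?thesis
    using J' finite_measure_mono by (meson order_trans)
qed

lemma concentration_le_of_nbhd_subset:
  assumes "prob_space m"
    and sub: "\<And>A. A \<in> sets m \<Longrightarrow> nbhd M d r A \<subseteq> nbhd M d' r' A"
    and meas: "\<And>A. A \<in> sets m \<Longrightarrow> nbhd M d' r' A \<in> sets m"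
  shows "concentration M d' m r' \<le> concentration M d m r"
proof -
  interpret prob_space m by fact
  have "bdd_above {1 - measure m (nbhd M d r A) | A. A \<in> sets m \<and> 1/2 \<le> measure m A}"
    by (rule bdd_aboveI[of _ 1]) auto
  moreover have "1 - measure m (nbhd M d' r' A) \<le> 1 - measure m (nbhd M d r A)"
    if "A \<in> sets m" for A
    using finite_measure_mono[OF sub meas] that by simp
  ultimately show ?thesis
    unfolding concentration_def
    by (intro cSup_least) (force intro: cSup_upper2 simp: prob_space)+
qed

lemma concentration_comp_le:
  assumes cont: "continuous_on {0..} F" and mp: "metric_preserving F"
    and mm: "mm_space M d m" and "0 < \<epsilon>"
  shows "concentration M (\<lambda>x y. F (d x y)) m (2 * F s + \<epsilon>) \<le> concentration M d m s"
proof (rule concentration_le_of_nbhd_subset[OF mm_space_prob_space[OF mm]])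
  interpret Metric_space M d
    using mm_space_Metric_space[OF mm] .
  fix A
  assume "A \<in> sets m"
  then have "A \<subseteq> M"
    using sets.sets_into_space mm_space_space[OF mm] by blast
  then show "nbhd M (\<lambda>x y. F (d x y)) (2 * F s + \<epsilon>) A \<in> sets m"
    using mm_space_openin_sets[OF mm openin_nbhd_comp[OF cont]] by blast
  show "nbhd M d s A \<subseteq> nbhd M (\<lambda>x y. F (d x y)) (2 * F s + \<epsilon>) A"
  proof
    fix x
    assume "x \<in> nbhd M d s A"
    then obtain a where "x \<in> M" "a \<in> A" "d x a < s"
      unfolding nbhd_def by blast
    moreover have "F (d x a) \<le> 2 * F s"
      using metric_preserving_le_twice[OF mp, of "d x a" s] \<open>d x a < s\<close> by simp
    ultimately show "x \<in> nbhd M (\<lambda>x y. F (d x y)) (2 * F s + \<epsilon>) A"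
      using \<open>0 < \<epsilon>\<close> unfolding nbhd_def by force
  qed
qed

lemma measure_distr_widening_ge:
  assumes mp: "metric_preserving F" and mm: "mm_space M d m" and "0 \<le> \<kappa>"
    and OD: "observable_diameter M d m \<kappa> < ereal r"
    and g: "\<And>x y. x \<in> M \<Longrightarrow> y \<in> M \<Longrightarrow> \<bar>g x - g y\<bar> \<le> F (d x y)"
    and gm: "g \<in> borel_measurable m"
    and S: "S \<in> sets borel" "S' \<in> sets borel"
    and widen: "\<And>s t. s \<in> S \<Longrightarrow> \<bar>t - s\<bar> \<le> 2 * F r \<Longrightarrow> t \<in> S'"
    and mass: "\<kappa> < measure (distr m borel g) S"
  shows "1 - \<kappa> \<le> measure (distr m borel g) S'"
proof -
  interpret prob_space m
    using mm_space_prob_space[OF mm] .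
  have sp: "space m = M"
    using mm_space_space[OF mm] .
  have "g -` S \<inter> M \<in> sets m" "\<kappa> < measure m (g -` S \<inter> M)"
    using measurable_sets[OF gm S(1)] mass measure_distr[OF gm S(1)] sp by simp_all
  then have "1 - \<kappa> \<le> measure m (nbhd M d r (g -` S \<inter> M))"
    by (rule measure_nbhd_ge_of_observable_diameter_less[OF mm \<open>0 \<le> \<kappa>\<close> OD])
  also have "nbhd M d r (g -` S \<inter> M) \<subseteq> g -` S' \<inter> space m"
  proof
    fix x
    assume "x \<in> nbhd M d r (g -` S \<inter> M)"
    then obtain a where "x \<in> M" "a \<in> M" "g a \<in> S" "d x a < r"
      unfolding nbhd_def by blast
    have "F (d x a) \<le> 2 * F r"
      using metric_preserving_le_twice[OF mp _ less_imp_le[OF \<open>d x a < r\<close>]]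
        Metric_space.nonneg[OF mm_space_Metric_space[OF mm]] by blast
    then have "\<bar>g x - g a\<bar> \<le> 2 * F r"
      using g[OF \<open>x \<in> M\<close> \<open>a \<in> M\<close>] by linarith
    then show "x \<in> g -` S' \<inter> space m"
      using widen[OF \<open>g a \<in> S\<close>] \<open>x \<in> M\<close> sp by blast
  qed
  then have "measure m (nbhd M d r (g -` S \<inter> M)) \<le> measure m (g -` S' \<inter> space m)"
    by (rule finite_measure_mono[OF _ measurable_sets[OF gm S(2)]])
  also have "\<dots> = measure (distr m borel g) S'"
    using measure_distr[OF gm S(2)] by simp
  finally show ?thesis .
qed

lemma observable_diameter_comp_le_of_less:
  assumes cont: "continuous_on {0..} F" and mp: "metric_preserving F"
    and mm: "mm_space M d m" and "0 < \<kappa>"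
    and OD: "observable_diameter M d m \<kappa> < ereal r"
  shows "observable_diameter M (\<lambda>x y. F (d x y)) m (2 * \<kappa>) \<le> ereal (4 * F r)"
  unfolding observable_diameter_def
proof (rule Sup_least, safe)
  interpret prob_space m
    using mm_space_prob_space[OF mm] .
  fix g :: "'a \<Rightarrow> real"
  assume g: "\<forall>x\<in>M. \<forall>y\<in>M. \<bar>g x - g y\<bar> \<le> F (d x y)"
  have gm: "g \<in> borel_measurable m"
    using g by (intro mm_space_measurable_of_modulus[OF mm cont metric_preserving_zero[OF mp]]) blast
  obtain D where "0 \<le> D" "observable_diameter M d m \<kappa> = ereal D"
    using observable_diameter_finite[OF mm \<open>0 < \<kappa>\<close>] .
  then have "0 \<le> F r"
    using OD metric_preserving_nonneg[OF mp] by simp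
  note widening = measure_distr_widening_ge[OF mp mm less_imp_le[OF \<open>0 < \<kappa>\<close>] OD _ gm]
  have "\<kappa> < measure (distr m borel g) {..t} \<Longrightarrow>
      1 - \<kappa> \<le> measure (distr m borel g) {..t + 2 * F r}" for t
    by (rule widening) (use g in auto)
  moreover have "\<kappa> < measure (distr m borel g) {t..} \<Longrightarrow>
      1 - \<kappa> \<le> measure (distr m borel g) {t - 2 * F r..}" for t
    by (rule widening) (use g in auto)
  ultimately have "partial_diameter (\<lambda>s t. \<bar>s - t\<bar>) (distr m borel g) (1 - 2 * \<kappa>)
      \<le> ereal (2 * (2 * F r))"
    using \<open>0 < \<kappa>\<close> \<open>0 \<le> F r\<close> gm
    by (intro real_distribution.partial_diameter_le_of_spread real_distribution_distr) auto
  then show "partial_diameter (\<lambda>s t. \<bar>s - t\<bar>) (distr m borel g) (1 - 2 * \<kappa>) \<le> ereal (4 * F r)"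
    by simp
qed

lemma observable_diameter_comp_le:
  assumes cont: "continuous_on {0..} F" and mp: "metric_preserving F"
    and mm: "mm_space M d m" and "0 < \<kappa>"
  shows "observable_diameter M (\<lambda>x y. F (d x y)) m (2 * \<kappa>)
    \<le> ereal (4 * F (real_of_ereal (observable_diameter M d m \<kappa>)))"
proof -
  obtain D where "0 \<le> D" and OD: "observable_diameter M d m \<kappa> = ereal D"
    using observable_diameter_finite[OF mm \<open>0 < \<kappa>\<close>] .
  have "(F \<longlongrightarrow> F D) (at_right D)"
    using cont \<open>0 \<le> D\<close> unfolding continuous_on_def
    by (auto intro: tendsto_within_subset)
  then have "((\<lambda>r. ereal (4 * F r)) \<longlongrightarrow> ereal (4 * F D)) (at_right D)"
    by (intro lim_ereal[THEN iffD2] tendsto_mult_left)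
  moreover have "\<forall>\<^sub>F r in at_right D.
      observable_diameter M (\<lambda>x y. F (d x y)) m (2 * \<kappa>) \<le> ereal (4 * F r)"
    using eventually_at_right_less[of D] by (rule eventually_mono)
      (use observable_diameter_comp_le_of_less[OF cont mp mm \<open>0 < \<kappa>\<close>] OD in simp)
  ultimately have "observable_diameter M (\<lambda>x y. F (d x y)) m (2 * \<kappa>) \<le> ereal (4 * F D)"
    by (rule tendsto_lowerbound) simp
  then show ?thesis
    using OD by simp
qed

theorem mainTheorem6:
  fixes F :: "real \<Rightarrow> real"
    and M :: "'a set" and d :: "'a \<Rightarrow> 'a \<Rightarrow> real" and m :: "'a measure"
  assumes "continuous_on {0..} F"
    and "metric_preserving F"
    and "mm_space M d m"
  shows "(\<forall>s>0. (SUP \<epsilon>\<in>{0<..}. concentration M (\<lambda>x y. F (d x y)) m (2 * F s + \<epsilon>))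
                   \<le> concentration M d m s)
      \<and> (\<forall>\<kappa>>0. observable_diameter M (\<lambda>x y. F (d x y)) m (2 * \<kappa>)
                 \<le> ereal (4 * F (real_of_ereal (observable_diameter M d m \<kappa>))))"
proof (intro conjI allI impI)
  fix s :: real
  show "(SUP \<epsilon>\<in>{0<..}. concentration M (\<lambda>x y. F (d x y)) m (2 * F s + \<epsilon>))
      \<le> concentration M d m s"
    using concentration_comp_le[OF assms] by (intro cSUP_least) auto
next
  fix \<kappa> :: real
  assume "0 < \<kappa>"
  then show "observable_diameter M (\<lambda>x y. F (d x y)) m (2 * \<kappa>)
      \<le> ereal (4 * F (real_of_ereal (observable_diameter M d m \<kappa>)))"
    by (rule observable_diameter_comp_le[OF assms])
qed

end
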